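(* Let $\boldsymbol{\mu}$ be a bandit model with $\mu_1>\mu_a$ for all $a\neq1$ and let $c_1,\dots,c_K>0$. For every $\boldsymbol{w}\in\Sigma_K$, \[ \inf_{\boldsymbol{\lambda}\in\mathrm{Alt}(\boldsymbol{\mu})}\sum_{a=1}^K\frac{w_a}{c_a}d(\mu_a,\lambda_a)=\min_{a\neq1}\left(\frac{w_1}{c_1}+\frac{w_a}{c_a}\right)I_{\frac{w_1/c_1}{w_1/c_1+w_a/c_a}}(\mu_1,\mu_a). \] Consequently \[ T^*(\boldsymbol{\mu})^{-1}=\sup_{\boldsymbol{w}\in\Sigma_K}\min_{a\neq1}\left(\frac{w_1}{c_1}+\frac{w_a}{c_a}\right)I_{\frac{w_1/c_1}{w_1/c_1+w_a/c_a}}(\mu_1,\mu_a),\qquad \boldsymbol{w}^*(\boldsymbol{\mu})=\arg\max_{\boldsymbol{w}\in\Sigma_K}\min_{a\neq1}\left(\frac{w_1}{c_1}+\frac{w_a}{c_a}\right)I_{\frac{w_1/c_1}{w_1/c_1+w_a/c_a}}(\mu_1,\mu_a). \]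
   Context: Rewards of the arms belong to a one-parameter natural exponential family $\{h(x)\exp(\theta_\mu x-b(\theta_\mu))\}$ parametrized by its mean $\mu$; $d(\mu,\mu')$ is the KL divergence between the members with means $\mu,\mu'$. $\Sigma_K$ is the probability simplex in $\mathbb{R}^K$. $\mathrm{Alt}(\boldsymbol{\mu})$ is the set of mean vectors $\boldsymbol{\lambda}$ of the family whose (unique) best arm differs from arm $1$, i.e. $\mathrm{Alt}(\boldsymbol{\mu})=\bigcup_{a\neq1}\{\boldsymbol{\lambda}:\lambda_a>\lambda_1\}$. For $\alpha\in[0,1]$, $I_\alpha(x,y)=\alpha\,d(x,\alpha x+(1-\alpha)y)+(1-\alpha)\,d(y,\alpha x+(1-\alpha)y)$. $T^*(\boldsymbol{\mu})^{-1}=\sup_{\boldsymbol{w}\in\Sigma_K}\inf_{\boldsymbol{\lambda}\in\mathrm{Alt}(\boldsymbol{\mu})}\sum_a\frac{w_a}{c_a}d(\mu_a,\lambda_a)$ and $\boldsymbol{w}^*(\boldsymbol{\mu})$ is the maximizing $\boldsymbol{w}$. *)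

theory Defs
  imports "HOL-Analysis.Analysis"
begin

text \<open>A one-parameter natural exponential family h(x) exp(theta x - b(theta)),
  theta ranging over the (open, interval) natural parameter space Theta, is
  represented through its log-partition function b.  Non-degeneracy of the
  family means b is strictly convex; b is differentiable and the mean of the
  member with natural parameter theta is b'(theta).\<close>

definition expfam :: "real set \<Rightarrow> (real \<Rightarrow> real) \<Rightarrow> bool" where
  "expfam \<Theta> b \<longleftrightarrow> open \<Theta> \<and> is_interval \<Theta> \<and> \<Theta> \<noteq> {} \<and>
     (\<forall>\<theta>\<in>\<Theta>. b differentiable (at \<theta>)) \<and> strict_mono_on \<Theta> (deriv b)"

definition means :: "real set \<Rightarrow> (real \<Rightarrow> real) \<Rightarrow> real set" where
  "means \<Theta> b = deriv b ` \<Theta>"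

definition theta_of :: "real set \<Rightarrow> (real \<Rightarrow> real) \<Rightarrow> real \<Rightarrow> real" where
  "theta_of \<Theta> b m = inv_into \<Theta> (deriv b) m"

text \<open>KL divergence between the members with means x and y:
  KL(P_theta || P_theta') = (theta - theta') x - b(theta) + b(theta').\<close>
definition kl :: "real set \<Rightarrow> (real \<Rightarrow> real) \<Rightarrow> real \<Rightarrow> real \<Rightarrow> real" where
  "kl \<Theta> b x y = b (theta_of \<Theta> b y) - b (theta_of \<Theta> b x)
                   - x * (theta_of \<Theta> b y - theta_of \<Theta> b x)"

definition I_fun :: "real set \<Rightarrow> (real \<Rightarrow> real) \<Rightarrow> real \<Rightarrow> real \<Rightarrow> real \<Rightarrow> real" where
  "I_fun \<Theta> b \<alpha> x y = \<alpha> * kl \<Theta> b x (\<alpha> * x + (1 - \<alpha>) * y)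
                       + (1 - \<alpha>) * kl \<Theta> b y (\<alpha> * x + (1 - \<alpha>) * y)"

text \<open>Arms are indexed by 1..K; vectors are functions on nat, relevant on {1..K}.\<close>
definition Sigma_K :: "nat \<Rightarrow> (nat \<Rightarrow> real) set" where
  "Sigma_K K = {w. (\<forall>a\<in>{1..K}. 0 \<le> w a) \<and> (\<forall>a. a \<notin> {1..K} \<longrightarrow> w a = 0)
                   \<and> (\<Sum>a=1..K. w a) = 1}"

definition Alt :: "real set \<Rightarrow> (real \<Rightarrow> real) \<Rightarrow> nat \<Rightarrow> (nat \<Rightarrow> real) set" where
  "Alt \<Theta> b K = {l. (\<forall>a\<in>{1..K}. l a \<in> means \<Theta> b) \<and> (\<exists>a\<in>{1..K}. a \<noteq> 1 \<and> l a > l 1)}"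

definition alt_obj :: "real set \<Rightarrow> (real \<Rightarrow> real) \<Rightarrow> nat \<Rightarrow> (nat \<Rightarrow> real)
                        \<Rightarrow> (nat \<Rightarrow> real) \<Rightarrow> (nat \<Rightarrow> real) \<Rightarrow> real" where
  "alt_obj \<Theta> b K c \<mu> w = (INF l\<in>Alt \<Theta> b K. \<Sum>a=1..K. w a / c a * kl \<Theta> b (\<mu> a) (l a))"

definition pair_obj :: "real set \<Rightarrow> (real \<Rightarrow> real) \<Rightarrow> nat \<Rightarrow> (nat \<Rightarrow> real)
                        \<Rightarrow> (nat \<Rightarrow> real) \<Rightarrow> (nat \<Rightarrow> real) \<Rightarrow> real" where
  "pair_obj \<Theta> b K c \<mu> w = Min ((\<lambda>a. (w 1 / c 1 + w a / c a) *
        I_fun \<Theta> b ((w 1 / c 1) / (w 1 / c 1 + w a / c a)) (\<mu> 1) (\<mu> a)) ` {2..K})"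

definition Tstar_inv :: "real set \<Rightarrow> (real \<Rightarrow> real) \<Rightarrow> nat \<Rightarrow> (nat \<Rightarrow> real) \<Rightarrow> (nat \<Rightarrow> real) \<Rightarrow> real" where
  "Tstar_inv \<Theta> b K c \<mu> = (SUP w\<in>Sigma_K K. alt_obj \<Theta> b K c \<mu> w)"

definition wstar :: "real set \<Rightarrow> (real \<Rightarrow> real) \<Rightarrow> nat \<Rightarrow> (nat \<Rightarrow> real) \<Rightarrow> (nat \<Rightarrow> real) \<Rightarrow> (nat \<Rightarrow> real) set" where
  "wstar \<Theta> b K c \<mu> = {w\<in>Sigma_K K. \<forall>v\<in>Sigma_K K. alt_obj \<Theta> b K c \<mu> v \<le> alt_obj \<Theta> b K c \<mu> w}"

end

theory Submission
  imports Defs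
begin

text \<open>For an alternative with \<open>\<lambda>\<^sub>a > \<lambda>\<^sub>1\<close> only arms \<open>1\<close> and \<open>a\<close> matter.  Write
  \<open>s\<^sub>1 = w\<^sub>1/c\<^sub>1\<close>, \<open>s\<^sub>a = w\<^sub>a/c\<^sub>a\<close> and let \<open>m\<close> be the \<open>s\<close>-weighted mean of \<open>\<mu>\<^sub>1, \<mu>\<^sub>a\<close>.  The
  compensation identity
    \<open>s\<^sub>1 d(\<mu>\<^sub>1,z) + s\<^sub>a d(\<mu>\<^sub>a,z) = s\<^sub>1 d(\<mu>\<^sub>1,m) + s\<^sub>a d(\<mu>\<^sub>a,m) + (s\<^sub>1+s\<^sub>a) d(m,z)\<close>
  shows that a common value \<open>\<lambda>\<^sub>1 = \<lambda>\<^sub>a = z\<close> costs at least \<open>(s\<^sub>1+s\<^sub>a) I\<^sub>\<alpha>(\<mu>\<^sub>1,\<mu>\<^sub>a)\<close>.  Since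
  \<open>d(u,\<cdot>)\<close> grows away from \<open>u\<close>, clamping \<open>\<lambda>\<^sub>1\<close> to \<open>[\<mu>\<^sub>a,\<mu>\<^sub>1]\<close> turns any pair
  \<open>\<lambda>\<^sub>1 \<le> \<lambda>\<^sub>a\<close> into such a common value without increasing the cost; conversely
  \<open>\<lambda>\<^sub>1 \<up> m\<close>, \<open>\<lambda>\<^sub>a \<down> m\<close> approaches the bound.  Both directions use that the log-partition
  function is convex and that the means form an interval (Darboux).\<close>

lemma expfam_has_deriv:
  assumes "expfam \<Theta> b" "t \<in> \<Theta>"
  shows "(b has_real_derivative deriv b t) (at t)"
  using assms DERIV_deriv_iff_real_differentiable by (auto simp: expfam_def)

lemma expfam_above_tangent:
  assumes fam: "expfam \<Theta> b" and t: "t \<in> \<Theta>" "t' \<in> \<Theta>"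
  shows "deriv b t * (t' - t) \<le> b t' - b t"
proof -
  have conn: "connected \<Theta>" and "open \<Theta>" and mono: "strict_mono_on \<Theta> (deriv b)"
    using fam is_interval_connected by (auto simp: expfam_def)
  have "convex_on \<Theta> b"
    using conn expfam_has_deriv[OF fam] strict_mono_on_leD[OF mono] by (rule convex_on_realI)
  then show ?thesis
    using convex_on_imp_above_tangent conn t \<open>open \<Theta>\<close> expfam_has_deriv[OF fam t(1)]
    by (metis has_field_derivative_at_within interior_open)
qed

lemma theta_of_mem: "m \<in> means \<Theta> b \<Longrightarrow> theta_of \<Theta> b m \<in> \<Theta>"
  unfolding theta_of_def means_def by (rule inv_into_into)

lemma deriv_theta_of: "m \<in> means \<Theta> b \<Longrightarrow> deriv b (theta_of \<Theta> b m) = m"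
  unfolding theta_of_def means_def by (rule f_inv_into_f)

lemma theta_of_deriv: "expfam \<Theta> b \<Longrightarrow> t \<in> \<Theta> \<Longrightarrow> theta_of \<Theta> b (deriv b t) = t"
  unfolding theta_of_def expfam_def by (simp add: strict_mono_on_imp_inj_on)

lemma theta_of_le_iff:
  assumes "expfam \<Theta> b" "x \<in> means \<Theta> b" "y \<in> means \<Theta> b"
  shows "theta_of \<Theta> b x \<le> theta_of \<Theta> b y \<longleftrightarrow> x \<le> y"
proof -
  have "strict_mono_on \<Theta> (deriv b)" using assms(1) by (simp add: expfam_def)
  from strict_mono_on_less_eq[OF this theta_of_mem[OF assms(2)] theta_of_mem[OF assms(3)]]
  show ?thesis by (simp add: assms deriv_theta_of)
qed

lemma DERIV_intermediate_value:
  fixes f f' :: "real \<Rightarrow> real"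
  assumes "a < b" and f: "\<And>t. t \<in> {a..b} \<Longrightarrow> (f has_real_derivative f' t) (at t)"
    and m: "f' a < m" "m < f' b"
  obtains t where "a < t" "t < b" "f' t = m"
proof -
  define g where "g t = f t - m * t" for t
  have g: "(g has_real_derivative f' t - m) (at t)" if "t \<in> {a..b}" for t
    unfolding g_def using f[OF that] by (auto intro!: derivative_eq_intros)
  have "continuous_on {a..b} g"
    using g DERIV_isCont by (blast intro: continuous_at_imp_continuous_on)
  then obtain s where s: "s \<in> {a..b}" and min: "\<And>t. t \<in> {a..b} \<Longrightarrow> g s \<le> g t"
    using continuous_attains_inf[of "{a..b}" g] \<open>a < b\<close> by auto
  obtain da where da: "da > 0" "\<And>h. 0 < h \<Longrightarrow> h < da \<Longrightarrow> g (a + h) < g a"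
    using DERIV_neg_dec_right[OF g[of a]] m \<open>a < b\<close> by auto
  obtain db where db: "db > 0" "\<And>h. 0 < h \<Longrightarrow> h < db \<Longrightarrow> g (b - h) < g b"
    using DERIV_pos_inc_left[OF g[of b]] m \<open>a < b\<close> by auto
  have "s \<noteq> a"
  proof
    define h where "h = min (da/2) (b - a)"
    have "0 < h" "h < da" "a + h \<in> {a..b}" using da(1) \<open>a < b\<close> by (auto simp: h_def)
    moreover assume "s = a"
    ultimately show False using da(2) min by fastforce
  qed
  moreover have "s \<noteq> b"
  proof
    define h where "h = min (db/2) (b - a)"
    have "0 < h" "h < db" "b - h \<in> {a..b}" using db(1) \<open>a < b\<close> by (auto simp: h_def)
    moreover assume "s = b"
    ultimately show False using db(2) min by fastforce
  qed
  ultimately have "a < s" "s < b" using s by auto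
  moreover have "f' s - m = 0"
  proof (rule DERIV_local_min[OF g])
    show "0 < min (s - a) (b - s)" using \<open>a < s\<close> \<open>s < b\<close> by simp
    show "\<forall>y. \<bar>s - y\<bar> < min (s - a) (b - s) \<longrightarrow> g s \<le> g y"
      by (intro allI impI min) (auto simp: abs_if split: if_splits)
  qed (use s in auto)
  ultimately show ?thesis using that by simp
qed

lemma is_interval_means:
  assumes fam: "expfam \<Theta> b"
  shows "is_interval (means \<Theta> b)"
  unfolding is_interval_1
proof (intro ballI allI impI)
  fix x y m assume x: "x \<in> means \<Theta> b" and y: "y \<in> means \<Theta> b" and m: "x \<le> m \<and> m \<le> y"
  consider "m = x" | "m = y" | "x < m" "m < y" using m by linarith
  then show "m \<in> means \<Theta> b"
  proof cases
    case 3
    define tx ty where "tx = theta_of \<Theta> b x" and "ty = theta_of \<Theta> b y"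
    have "tx < ty" using theta_of_le_iff[OF fam y x] 3 by (simp add: tx_def ty_def)
    have "convex \<Theta>" using fam by (simp add: expfam_def is_interval_convex)
    then have sub: "{tx..ty} \<subseteq> \<Theta>"
      using \<open>tx < ty\<close> theta_of_mem[OF x] theta_of_mem[OF y]
      unfolding tx_def ty_def by (intro atMostAtLeast_subset_convex)
    have "\<And>t. t \<in> {tx..ty} \<Longrightarrow> (b has_real_derivative deriv b t) (at t)"
      using sub expfam_has_deriv[OF fam] by blast
    moreover have "deriv b tx < m" "m < deriv b ty"
      using 3 by (simp_all add: tx_def ty_def deriv_theta_of x y)
    ultimately obtain t where t: "tx < t" "t < ty" "deriv b t = m"
      using DERIV_intermediate_value[OF \<open>tx < ty\<close>] by metis
    then have "t \<in> \<Theta>" using sub by auto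
    then show ?thesis using t(3) unfolding means_def by blast
  qed (use x y in auto)
qed

lemma convex_means: "expfam \<Theta> b \<Longrightarrow> convex (means \<Theta> b)"
  by (intro is_interval_convex is_interval_means)

lemma weighted_mean_mem_means:
  fixes s1 sa :: real
  assumes "expfam \<Theta> b" "u1 \<in> means \<Theta> b" "ua \<in> means \<Theta> b" "0 \<le> s1" "0 \<le> sa"
  defines "\<alpha> \<equiv> s1 / (s1 + sa)"
  shows "\<alpha> * u1 + (1 - \<alpha>) * ua \<in> means \<Theta> b"
proof -
  have "0 \<le> \<alpha>" "\<alpha> \<le> 1" using assms by (auto simp: \<alpha>_def divide_le_eq_1)
  then show ?thesis
    using convexD[OF convex_means assms(2,3), of \<alpha> "1 - \<alpha>"] assms(1) by simp
qed

lemma kl_self [simp]: "kl \<Theta> b x x = 0"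
  by (simp add: kl_def)

lemma kl_nonneg:
  assumes "expfam \<Theta> b" "x \<in> means \<Theta> b" "z \<in> means \<Theta> b"
  shows "0 \<le> kl \<Theta> b x z"
  using expfam_above_tangent[OF assms(1) theta_of_mem theta_of_mem, OF assms(2,3)]
  by (simp add: kl_def deriv_theta_of assms)

lemma kl_le_kl_between:
  assumes fam: "expfam \<Theta> b"
    and x: "x \<in> means \<Theta> b" and z: "z \<in> means \<Theta> b" and u: "u \<in> means \<Theta> b"
    and between: "x \<le> z \<and> z \<le> u \<or> u \<le> z \<and> z \<le> x"
  shows "kl \<Theta> b u z \<le> kl \<Theta> b u x"
proof -
  define tx tz where "tx = theta_of \<Theta> b x" and "tz = theta_of \<Theta> b z"
  have tangent: "z * (tx - tz) \<le> b tx - b tz"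
    using expfam_above_tangent[OF fam theta_of_mem[OF z] theta_of_mem[OF x]]
    by (simp add: deriv_theta_of z tx_def tz_def)
  have "0 \<le> (tz - tx) * (u - z)"
    using between theta_of_le_iff[OF fam x z] theta_of_le_iff[OF fam z x]
    by (auto simp: tx_def tz_def intro: mult_nonneg_nonneg mult_nonpos_nonpos)
  with tangent show ?thesis
    unfolding kl_def tx_def[symmetric] tz_def[symmetric] by (simp add: algebra_simps)
qed

lemma kl_three_point:
  assumes "(s1 + sa) * m = s1 * u1 + sa * ua"
  shows "s1 * kl \<Theta> b u1 z + sa * kl \<Theta> b ua z
       = s1 * kl \<Theta> b u1 m + sa * kl \<Theta> b ua m + (s1 + sa) * kl \<Theta> b m z"
proof -
  define tz tm where "tz = theta_of \<Theta> b z" and "tm = theta_of \<Theta> b m"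
  have "(s1 + sa) * m * (tz - tm) = (s1 * u1 + sa * ua) * (tz - tm)"
    using assms by simp
  then show ?thesis
    unfolding kl_def tz_def[symmetric] tm_def[symmetric] by (simp add: algebra_simps)
qed

lemma isCont_kl_deriv:
  assumes fam: "expfam \<Theta> b" and t: "t \<in> \<Theta>"
  shows "isCont (\<lambda>s. kl \<Theta> b u (deriv b s)) t"
proof -
  have "eventually (\<lambda>s. s \<in> \<Theta>) (nhds t)"
    using fam t by (intro eventually_nhds_in_open) (auto simp: expfam_def)
  then have ev: "eventually (\<lambda>s. kl \<Theta> b u (deriv b s)
                  = b s - b (theta_of \<Theta> b u) - u * (s - theta_of \<Theta> b u)) (nhds t)"
    by eventually_elim (simp add: kl_def theta_of_deriv[OF fam])
  have "isCont b t"
    using expfam_has_deriv[OF fam t] by (rule DERIV_isCont)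
  then have "isCont (\<lambda>s. b s - b (theta_of \<Theta> b u) - u * (s - theta_of \<Theta> b u)) t"
    by (intro continuous_intros)
  then show ?thesis
    using isCont_cong[OF ev] by simp
qed

lemma scaled_I_fun:
  fixes s1 sa :: real
  assumes "0 \<le> s1" "0 \<le> sa"
  defines "\<alpha> \<equiv> s1 / (s1 + sa)"
  shows "(s1 + sa) * I_fun \<Theta> b \<alpha> u1 ua
     = s1 * kl \<Theta> b u1 (\<alpha> * u1 + (1 - \<alpha>) * ua) + sa * kl \<Theta> b ua (\<alpha> * u1 + (1 - \<alpha>) * ua)"
proof (cases "s1 + sa = 0")
  case True
  then have "s1 = 0" "sa = 0" using assms by auto
  then show ?thesis by simp
next
  case False
  then have "(s1 + sa) * \<alpha> = s1" "(s1 + sa) * (1 - \<alpha>) = sa"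
    by (auto simp: \<alpha>_def field_simps)
  then show ?thesis
    unfolding I_fun_def by (simp add: distrib_left mult.assoc[symmetric])
qed

lemma weighted_kl_pair_lower:
  fixes s1 sa :: real
  assumes fam: "expfam \<Theta> b"
    and u1: "u1 \<in> means \<Theta> b" and ua: "ua \<in> means \<Theta> b" and "ua \<le> u1"
    and s: "0 \<le> s1" "0 \<le> sa"
    and x: "x \<in> means \<Theta> b" and y: "y \<in> means \<Theta> b" and "x \<le> y"
  shows "(s1 + sa) * I_fun \<Theta> b (s1 / (s1 + sa)) u1 ua \<le> s1 * kl \<Theta> b u1 x + sa * kl \<Theta> b ua y"
proof (cases "s1 + sa = 0")
  case True
  then have "s1 = 0" "sa = 0" using s by auto
  then show ?thesis by simp
next
  case False
  define \<alpha> where "\<alpha> = s1 / (s1 + sa)"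
  define m where "m = \<alpha> * u1 + (1 - \<alpha>) * ua"
  have m_mem: "m \<in> means \<Theta> b"
    unfolding m_def \<alpha>_def using fam u1 ua s by (rule weighted_mean_mem_means)
  have "(s1 + sa) * \<alpha> = s1" "(s1 + sa) * (1 - \<alpha>) = sa"
    using False by (auto simp: \<alpha>_def field_simps)
  then have m_eq: "(s1 + sa) * m = s1 * u1 + sa * ua"
    unfolding m_def by (metis distrib_left mult.assoc)
  \<comment> \<open>\<open>z\<close> is no farther than \<open>x\<close> from \<open>u1\<close> and, as \<open>x \<le> y\<close>, no farther than \<open>y\<close> from \<open>ua\<close>\<close>
  define z where "z = min (max x ua) u1"
  have "ua \<le> z" "z \<le> u1" using \<open>ua \<le> u1\<close> by (auto simp: z_def)
  then have z_mem: "z \<in> means \<Theta> b"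
    using is_interval_means[OF fam] u1 ua unfolding is_interval_1 by blast
  have "(s1 + sa) * I_fun \<Theta> b (s1 / (s1 + sa)) u1 ua = s1 * kl \<Theta> b u1 m + sa * kl \<Theta> b ua m"
    unfolding m_def \<alpha>_def using s by (rule scaled_I_fun)
  also have "\<dots> \<le> s1 * kl \<Theta> b u1 z + sa * kl \<Theta> b ua z"
    using kl_three_point[OF m_eq, of \<Theta> b z] kl_nonneg[OF fam m_mem z_mem] s by simp
  also have "\<dots> \<le> s1 * kl \<Theta> b u1 x + sa * kl \<Theta> b ua y"
  proof (intro add_mono mult_left_mono)
    show "kl \<Theta> b u1 z \<le> kl \<Theta> b u1 x"
      using \<open>ua \<le> u1\<close> by (intro kl_le_kl_between[OF fam x z_mem u1]) (auto simp: z_def)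
    show "kl \<Theta> b ua z \<le> kl \<Theta> b ua y"
      using \<open>ua \<le> u1\<close> \<open>x \<le> y\<close> by (intro kl_le_kl_between[OF fam y z_mem ua]) (auto simp: z_def)
  qed (use s in auto)
  finally show ?thesis .
qed

lemma weighted_kl_pair_approx:
  fixes s1 sa :: real
  assumes fam: "expfam \<Theta> b"
    and u1: "u1 \<in> means \<Theta> b" and ua: "ua \<in> means \<Theta> b"
    and s: "0 \<le> s1" "0 \<le> sa" and "e > 0"
  obtains x y where "x \<in> means \<Theta> b" "y \<in> means \<Theta> b" "x < y"
    "s1 * kl \<Theta> b u1 x + sa * kl \<Theta> b ua y < (s1 + sa) * I_fun \<Theta> b (s1 / (s1 + sa)) u1 ua + e"
proof -
  define \<alpha> where "\<alpha> = s1 / (s1 + sa)"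
  define m where "m = \<alpha> * u1 + (1 - \<alpha>) * ua"
  have m_mem: "m \<in> means \<Theta> b"
    unfolding m_def \<alpha>_def using fam u1 ua s by (rule weighted_mean_mem_means)
  define tm where "tm = theta_of \<Theta> b m"
  have tm: "tm \<in> \<Theta>" "deriv b tm = m"
    using m_mem by (simp_all add: tm_def theta_of_mem deriv_theta_of)
  have "open \<Theta>" and mono: "strict_mono_on \<Theta> (deriv b)" using fam by (auto simp: expfam_def)
  \<comment> \<open>the bound is not attained since \<open>x < y\<close> is required, so \<open>m\<close> is approached from both sides\<close>
  define g where "g t = s1 * kl \<Theta> b u1 (deriv b (tm - t)) + sa * kl \<Theta> b ua (deriv b (tm + t))" for t
  have g0: "g 0 = (s1 + sa) * I_fun \<Theta> b \<alpha> u1 ua"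
    using scaled_I_fun[OF s] tm(2) by (simp add: g_def m_def \<alpha>_def)
  have shift: "((\<lambda>t. tm - t) \<longlongrightarrow> tm) (at_right 0)" "((\<lambda>t. tm + t) \<longlongrightarrow> tm) (at_right 0)"
    by (auto intro!: tendsto_eq_intros)
  have "(g \<longlongrightarrow> g 0) (at_right 0)"
    unfolding g_def using isCont_kl_deriv[OF fam tm(1)] shift
    by (auto intro!: tendsto_intros isCont_tendsto_compose[of tm])
  then have "eventually (\<lambda>t. g t < g 0 + e) (at_right 0)"
    using \<open>e > 0\<close> by (intro order_tendstoD(2)) auto
  moreover have "eventually (\<lambda>t. tm - t \<in> \<Theta> \<and> tm + t \<in> \<Theta>) (at_right 0)"
    using topological_tendstoD[OF shift(1) \<open>open \<Theta>\<close> tm(1)]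
      topological_tendstoD[OF shift(2) \<open>open \<Theta>\<close> tm(1)]
    by eventually_elim auto
  ultimately have "eventually (\<lambda>t. 0 < t \<and> tm - t \<in> \<Theta> \<and> tm + t \<in> \<Theta> \<and> g t < g 0 + e)
                     (at_right (0::real))"
    using eventually_at_right_less[of "0::real"] by eventually_elim auto
  then obtain t where t: "0 < t" "tm - t \<in> \<Theta>" "tm + t \<in> \<Theta>" "g t < g 0 + e"
    using eventually_happens'[OF trivial_limit_at_right_real] by blast
  show ?thesis
  proof
    show "deriv b (tm - t) \<in> means \<Theta> b" "deriv b (tm + t) \<in> means \<Theta> b"
      using t by (auto simp: means_def)
    show "deriv b (tm - t) < deriv b (tm + t)"
      using strict_mono_onD[OF mono t(2,3)] t(1) by simp
    show "s1 * kl \<Theta> b u1 (deriv b (tm - t)) + sa * kl \<Theta> b ua (deriv b (tm + t))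
        < (s1 + sa) * I_fun \<Theta> b (s1 / (s1 + sa)) u1 ua + e"
      using t(4) g0 by (simp add: g_def \<alpha>_def)
  qed
qed

definition pair_cost :: "real set \<Rightarrow> (real \<Rightarrow> real) \<Rightarrow> (nat \<Rightarrow> real) \<Rightarrow> (nat \<Rightarrow> real)
                          \<Rightarrow> (nat \<Rightarrow> real) \<Rightarrow> nat \<Rightarrow> real" where
  "pair_cost \<Theta> b c \<mu> w a = (w 1 / c 1 + w a / c a) *
     I_fun \<Theta> b ((w 1 / c 1) / (w 1 / c 1 + w a / c a)) (\<mu> 1) (\<mu> a)"

definition weighted_kl :: "real set \<Rightarrow> (real \<Rightarrow> real) \<Rightarrow> nat \<Rightarrow> (nat \<Rightarrow> real)
                            \<Rightarrow> (nat \<Rightarrow> real) \<Rightarrow> (nat \<Rightarrow> real) \<Rightarrow> (nat \<Rightarrow> real) \<Rightarrow> real" where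
  "weighted_kl \<Theta> b K c \<mu> w l = (\<Sum>j=1..K. w j / c j * kl \<Theta> b (\<mu> j) (l j))"

lemma pair_obj_eq_Min: "pair_obj \<Theta> b K c \<mu> w = Min (pair_cost \<Theta> b c \<mu> w ` {2..K})"
  unfolding pair_obj_def pair_cost_def ..

lemma alt_obj_eq_INF: "alt_obj \<Theta> b K c \<mu> w = (INF l\<in>Alt \<Theta> b K. weighted_kl \<Theta> b K c \<mu> w l)"
  unfolding alt_obj_def weighted_kl_def ..

context
  fixes \<Theta> :: "real set" and b :: "real \<Rightarrow> real" and K :: nat and c \<mu> :: "nat \<Rightarrow> real"
  assumes fam: "expfam \<Theta> b"
    and K: "K \<ge> 2"
    and mu_in: "\<forall>a\<in>{1..K}. \<mu> a \<in> means \<Theta> b"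
    and best: "\<forall>a\<in>{2..K}. \<mu> 1 > \<mu> a"
    and c_pos: "\<forall>a\<in>{1..K}. c a > 0"
begin

lemma weight_nonneg: "w \<in> Sigma_K K \<Longrightarrow> a \<in> {1..K} \<Longrightarrow> 0 \<le> w a / c a"
  using c_pos by (auto simp: Sigma_K_def less_imp_le)

lemma pair_obj_le_weighted_kl:
  assumes w: "w \<in> Sigma_K K" and l: "l \<in> Alt \<Theta> b K"
  shows "pair_obj \<Theta> b K c \<mu> w \<le> weighted_kl \<Theta> b K c \<mu> w l"
proof -
  obtain a where "a \<in> {1..K}" "a \<noteq> 1" "l 1 < l a"
    and l_mem: "\<forall>j\<in>{1..K}. l j \<in> means \<Theta> b"
    using l unfolding Alt_def by blast
  then have a: "a \<in> {2..K}" "l 1 < l a" by auto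
  have "pair_obj \<Theta> b K c \<mu> w \<le> pair_cost \<Theta> b c \<mu> w a"
    unfolding pair_obj_eq_Min using a(1) by (intro Min_le) auto
  also have "\<dots> \<le> w 1 / c 1 * kl \<Theta> b (\<mu> 1) (l 1) + w a / c a * kl \<Theta> b (\<mu> a) (l a)"
    unfolding pair_cost_def using a l_mem mu_in best weight_nonneg[OF w]
    by (intro weighted_kl_pair_lower[OF fam]) (auto simp: less_imp_le)
  also have "\<dots> = (\<Sum>j\<in>{1, a}. w j / c j * kl \<Theta> b (\<mu> j) (l j))"
    using a by simp
  also have "\<dots> \<le> weighted_kl \<Theta> b K c \<mu> w l"
    unfolding weighted_kl_def
  proof (rule sum_mono2)
    show "0 \<le> w j / c j * kl \<Theta> b (\<mu> j) (l j)" if "j \<in> {1..K} - {1, a}" for j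
      using that mu_in l_mem
      by (intro mult_nonneg_nonneg weight_nonneg[OF w] kl_nonneg[OF fam]) auto
  qed (use a in auto)
  finally show ?thesis .
qed

lemma weighted_kl_approx_pair_obj:
  assumes w: "w \<in> Sigma_K K" and "e > 0"
  obtains l where "l \<in> Alt \<Theta> b K" "weighted_kl \<Theta> b K c \<mu> w l < pair_obj \<Theta> b K c \<mu> w + e"
proof -
  have "pair_obj \<Theta> b K c \<mu> w \<in> pair_cost \<Theta> b c \<mu> w ` {2..K}"
    unfolding pair_obj_eq_Min using K by (intro Min_in) auto
  then obtain a where a: "a \<in> {2..K}"
    and attained: "pair_obj \<Theta> b K c \<mu> w = pair_cost \<Theta> b c \<mu> w a"
    by blast
  have "\<mu> 1 \<in> means \<Theta> b" "\<mu> a \<in> means \<Theta> b" "0 \<le> w 1 / c 1" "0 \<le> w a / c a"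
    using a mu_in weight_nonneg[OF w] by auto
  then obtain x y where xy: "x \<in> means \<Theta> b" "y \<in> means \<Theta> b" "x < y"
    "w 1 / c 1 * kl \<Theta> b (\<mu> 1) x + w a / c a * kl \<Theta> b (\<mu> a) y < pair_obj \<Theta> b K c \<mu> w + e"
    unfolding attained pair_cost_def using weighted_kl_pair_approx[OF fam _ _ _ _ \<open>e > 0\<close>] by blast
  define l where "l = \<mu>(1 := x, a := y)"
  have "a \<in> {1..K}" "a \<noteq> 1" using a by auto
  moreover have "l 1 < l a" using a xy by (simp add: l_def)
  moreover have "\<forall>j\<in>{1..K}. l j \<in> means \<Theta> b" using mu_in xy by (simp add: l_def)
  ultimately have "l \<in> Alt \<Theta> b K" unfolding Alt_def by blast
  moreover have "weighted_kl \<Theta> b K c \<mu> w l = (\<Sum>j\<in>{1, a}. w j / c j * kl \<Theta> b (\<mu> j) (l j))"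
    unfolding weighted_kl_def using a by (intro sum.mono_neutral_right) (auto simp: l_def)
  moreover have "\<dots> = w 1 / c 1 * kl \<Theta> b (\<mu> 1) x + w a / c a * kl \<Theta> b (\<mu> a) y"
    using a by (simp add: l_def)
  ultimately show ?thesis using that xy(4) by simp
qed

lemma alt_obj_eq_pair_obj:
  assumes w: "w \<in> Sigma_K K"
  shows "alt_obj \<Theta> b K c \<mu> w = pair_obj \<Theta> b K c \<mu> w"
  unfolding alt_obj_eq_INF
proof (rule cInf_eq)
  show "pair_obj \<Theta> b K c \<mu> w \<le> s" if "s \<in> weighted_kl \<Theta> b K c \<mu> w ` Alt \<Theta> b K" for s
    using that pair_obj_le_weighted_kl[OF w] by auto
  show "r \<le> pair_obj \<Theta> b K c \<mu> w"
    if lower: "\<And>s. s \<in> weighted_kl \<Theta> b K c \<mu> w ` Alt \<Theta> b K \<Longrightarrow> r \<le> s" for r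
  proof (rule field_le_epsilon)
    fix e :: real assume "e > 0"
    then obtain l where "l \<in> Alt \<Theta> b K" "weighted_kl \<Theta> b K c \<mu> w l < pair_obj \<Theta> b K c \<mu> w + e"
      using weighted_kl_approx_pair_obj[OF w] by blast
    then show "r \<le> pair_obj \<Theta> b K c \<mu> w + e" using lower by fastforce
  qed
qed

end

theorem proposition3:
  fixes \<Theta> :: "real set" and b :: "real \<Rightarrow> real" and K :: nat
    and c \<mu> :: "nat \<Rightarrow> real"
  assumes fam: "expfam \<Theta> b"
    and K: "K \<ge> 2"
    and mu_in: "\<forall>a\<in>{1..K}. \<mu> a \<in> means \<Theta> b"
    and best: "\<forall>a\<in>{2..K}. \<mu> 1 > \<mu> a"
    and c_pos: "\<forall>a\<in>{1..K}. c a > 0"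
  shows "(\<forall>w\<in>Sigma_K K. alt_obj \<Theta> b K c \<mu> w = pair_obj \<Theta> b K c \<mu> w)
       \<and> Tstar_inv \<Theta> b K c \<mu> = (SUP w\<in>Sigma_K K. pair_obj \<Theta> b K c \<mu> w)
       \<and> wstar \<Theta> b K c \<mu> = {w\<in>Sigma_K K. \<forall>v\<in>Sigma_K K.
                                 pair_obj \<Theta> b K c \<mu> v \<le> pair_obj \<Theta> b K c \<mu> w}"
proof -
  have eq: "\<forall>w\<in>Sigma_K K. alt_obj \<Theta> b K c \<mu> w = pair_obj \<Theta> b K c \<mu> w"
    using alt_obj_eq_pair_obj[OF assms] by blast
  moreover have "Tstar_inv \<Theta> b K c \<mu> = (SUP w\<in>Sigma_K K. pair_obj \<Theta> b K c \<mu> w)"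
    unfolding Tstar_inv_def using eq by (intro SUP_cong) auto
  moreover have "wstar \<Theta> b K c \<mu> = {w\<in>Sigma_K K. \<forall>v\<in>Sigma_K K.
                                 pair_obj \<Theta> b K c \<mu> v \<le> pair_obj \<Theta> b K c \<mu> w}"
    unfolding wstar_def using eq by auto
  ultimately show ?thesis by blast
qed

end
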